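(* There exists a $(201,9)$-arc in $\operatorname{PG}(2,27)$; hence $m_9(2,27)\ge 201$.
   Context: Points of $\operatorname{PG}(2,q)$ are the 1-dimensional subspaces of $\operatorname{GF}(q)^3$, lines are the 2-dimensional subspaces. An $(n,r)$-arc in $\operatorname{PG}(2,q)$ is a set $\mathcal B$ of $n$ points such that every line contains at most $r$ points of $\mathcal B$ and at least one line contains exactly $r$ points of $\mathcal B$. $m_r(2,q)$ is the maximum $n$ for which an $(n,r)$-arc in $\operatorname{PG}(2,q)$ exists. *)

theory Defs
  imports Main
begin

type_synonym 'a vec3 = "'a \<times> 'a \<times> 'a"

definition vsmult :: "'a::field \<Rightarrow> 'a vec3 \<Rightarrow> 'a vec3" where
  "vsmult c v = (c * fst v, c * fst (snd v), c * snd (snd v))"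

definition vadd :: "'a::field vec3 \<Rightarrow> 'a vec3 \<Rightarrow> 'a vec3" where
  "vadd u w = (fst u + fst w, fst (snd u) + fst (snd w), snd (snd u) + snd (snd w))"

definition lin_indep2 :: "'a::field vec3 \<Rightarrow> 'a vec3 \<Rightarrow> bool" where
  "lin_indep2 u w \<longleftrightarrow> (\<forall>s t. vadd (vsmult s u) (vsmult t w) = (0,0,0) \<longrightarrow> s = 0 \<and> t = 0)"

definition pg_points :: "'a::field vec3 set set" where
  "pg_points = {S. \<exists>v. v \<noteq> (0,0,0) \<and> S = {vsmult c v | c. True}}"

definition pg_lines :: "'a::field vec3 set set" where
  "pg_lines = {S. \<exists>u w. lin_indep2 u w \<and> S = {vadd (vsmult s u) (vsmult t w) | s t. True}}"

definition is_arc :: "'a::field vec3 set set \<Rightarrow> nat \<Rightarrow> nat \<Rightarrow> bool" where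
  "is_arc B n r \<longleftrightarrow> B \<subseteq> pg_points \<and> finite B \<and> card B = n \<and>
     (\<forall>L\<in>pg_lines. card {P\<in>B. P \<subseteq> L} \<le> r) \<and>
     (\<exists>L\<in>pg_lines. card {P\<in>B. P \<subseteq> L} = r)"

definition m_arc :: "nat \<Rightarrow> 'a::field itself \<Rightarrow> nat" where
  "m_arc r _ = Max {n. \<exists>B :: 'a vec3 set set. is_arc B n r}"

end

theory Submission
  imports Defs "HOL-Library.Cardinality" "HOL-Computational_Algebra.Polynomial"
begin

text \<open>
  A field of order 27 has characteristic 3 and contains a root \<open>\<alpha>\<close> of \<open>t\<^sup>3 - t - 1\<close>, so it is
  the image of an explicit model of \<open>GF(3)[t]/(t\<^sup>3 - t - 1)\<close>. The arc consists of 201 points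
  \<open>(a : b : 1)\<close>; for each \<open>a\<close> those with first coordinate \<open>a\<close> form a column of at most 9
  points. A line \<open>n\<^sub>1 x + n\<^sub>2 y + n\<^sub>3 z = 0\<close> with \<open>n\<^sub>2 \<noteq> 0\<close> is an affine graph \<open>b = l a + m\<close> and meets each column \<open>a\<close> at most once, so
  the bound 9 reduces to a check over the \<open>27\<^sup>2\<close> pairs \<open>(l, m)\<close>, done by evaluation in the
  model; the other lines meet the arc in at most one column. The column \<open>a = 1\<close> has 9 points.
\<close>

section \<open>Fields of order 27\<close>

lemma of_nat_card_UNIV_eq_0: "of_nat CARD('a) = (0::'a::{ring_1,finite})"
proof -
  have "(\<Sum>x\<in>UNIV. x + 1) = (\<Sum>x\<in>UNIV. x :: 'a)"
    by (rule sum.reindex_bij_witness[of _ "\<lambda>x. x - 1" "\<lambda>x. x + 1"]) auto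
  then show ?thesis
    by (simp add: sum.distrib)
qed

lemma char_3_of_card_27:
  assumes "CARD('a::{field,finite}) = 27"
  shows "(3::'a) = 0"
proof -
  have "(3::'a) ^ 3 = 0"
    using of_nat_card_UNIV_eq_0[where 'a='a] assms by simp
  then show ?thesis
    by (simp only: power_eq_0_iff)
qed

lemma power_card_UNIV_eq:
  fixes x :: "'a::{field,finite}"
  shows "x ^ CARD('a) = x"
proof (cases "x = 0")
  case False
  let ?U = "UNIV - {0::'a}"
  have "(\<Prod>y\<in>?U. x * y) = (\<Prod>y\<in>?U. y)"
    using False by (intro prod.reindex_bij_witness[of _ "\<lambda>y. y / x" "\<lambda>y. x * y"]) auto
  then have "x ^ card ?U = 1"
    by (simp add: prod.distrib)
  moreover have "CARD('a) = Suc (card ?U)"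
    by (simp add: card_Diff_subset)
  ultimately show ?thesis
    by (simp only: power_Suc mult_1_right)
qed simp

lemma cube_root_exists:
  assumes card: "CARD('a::{field,finite}) = 27"
  shows "\<exists>\<alpha>::'a. \<alpha> ^ 3 = \<alpha> + 1"
proof (rule ccontr)
  assume no_root: "\<nexists>\<alpha>::'a. \<alpha> ^ 3 = \<alpha> + 1"
  text \<open>\<open>Q\<close> is the quotient of \<open>t\<^sup>2\<^sup>7 - t\<close> by \<open>t\<^sup>3 - t - 1\<close> over \<open>GF(3)\<close>, with coefficients in
    \<open>{-1, 0, 1}\<close>; over the integers the division leaves a remainder divisible by 3.\<close>
  define Q :: "'a poly" where
    "Q = [:0, 1, -1, 1, 0, -1, -1, 1, 1, 1, 0, 1, 0, 0, 1, -1, 1, 0, -1, -1, 1, 1, 1, 0, 1:]"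
  have "(x ^ 3 - x - 1) * poly Q x = x ^ 27 - x + 3 * (x^6 - x^8 - x^9 + x^19 - x^21 - x^22)"
    for x :: 'a
    unfolding Q_def by simp algebra
  then have "(x ^ 3 - x - 1) * poly Q x = 0" for x :: 'a
    using power_card_UNIV_eq[of x] char_3_of_card_27[OF card] card by simp
  moreover have "x ^ 3 - x - 1 \<noteq> 0" for x :: 'a
    using no_root by (auto simp: algebra_simps)
  ultimately have "{x. poly Q x = 0} = UNIV"
    by auto
  moreover have "Q \<noteq> 0" and "degree Q = 24"
    unfolding Q_def by simp_all
  ultimately show False
    using card_poly_roots_bound[of Q] card by simp
qed

section \<open>Points and lines of \<open>PG(2, q)\<close>\<close>

definition pg_point :: "'a::field vec3 \<Rightarrow> 'a vec3 set" where
  "pg_point v = {vsmult c v | c. True}"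

definition pg_line :: "'a::field vec3 \<Rightarrow> 'a vec3 \<Rightarrow> 'a vec3 set" where
  "pg_line u w = {vadd (vsmult s u) (vsmult t w) | s t. True}"

definition dot :: "'a::field vec3 \<Rightarrow> 'a vec3 \<Rightarrow> 'a" where
  "dot n v = fst n * fst v + fst (snd n) * fst (snd v) + snd (snd n) * snd (snd v)"

definition cross :: "'a::field vec3 \<Rightarrow> 'a vec3 \<Rightarrow> 'a vec3" where
  "cross u w = (fst (snd u) * snd (snd w) - snd (snd u) * fst (snd w),
                snd (snd u) * fst w - fst u * snd (snd w),
                fst u * fst (snd w) - fst (snd u) * fst w)"

lemma pg_point_in_pg_points: "v \<noteq> (0, 0, 0) \<Longrightarrow> pg_point v \<in> pg_points"
  unfolding pg_points_def pg_point_def by blast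

lemma pg_lines_iff: "L \<in> pg_lines \<longleftrightarrow> (\<exists>u w. lin_indep2 u w \<and> L = pg_line u w)"
  unfolding pg_lines_def pg_line_def by blast

lemma mem_pg_point_self: "v \<in> pg_point v"
  unfolding pg_point_def by (rule CollectI, rule exI[of _ 1]) (simp add: vsmult_def)

lemma pg_point_subset_pg_line:
  assumes "v \<in> pg_line u w"
  shows "pg_point v \<subseteq> pg_line u w"
proof
  fix x assume "x \<in> pg_point v"
  then obtain c where x: "x = vsmult c v"
    unfolding pg_point_def by blast
  obtain s t where v: "v = vadd (vsmult s u) (vsmult t w)"
    using assms unfolding pg_line_def by blast
  have "x = vadd (vsmult (c * s) u) (vsmult (c * t) w)"
    unfolding x v vadd_def vsmult_def by (simp add: algebra_simps)
  then show "x \<in> pg_line u w"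
    unfolding pg_line_def by blast
qed

lemma inj_pg_point_affine: "inj (\<lambda>(x, y). pg_point (x, y, 1 :: 'a::field))"
proof (rule injI, clarify)
  fix x y x' y' :: 'a
  assume "pg_point (x, y, 1) = pg_point (x', y', 1)"
  then have "(x', y', 1) \<in> pg_point (x, y, 1)"
    using mem_pg_point_self by metis
  then show "x = x' \<and> y = y'"
    unfolding pg_point_def by (auto simp: vsmult_def)
qed

lemma cross_nonzero:
  assumes indep: "lin_indep2 u w"
  shows "cross u w \<noteq> (0, 0, 0)"
proof
  assume "cross u w = (0, 0, 0)"
  moreover obtain u1 u2 u3 w1 w2 w3 where uw: "u = (u1, u2, u3)" "w = (w1, w2, w3)"
    by (cases u, cases w) auto
  ultimately have "u2 * w3 = u3 * w2" "u3 * w1 = u1 * w3" "u1 * w2 = u2 * w1"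
    by (auto simp: cross_def)
  then have "vadd (vsmult w1 u) (vsmult (- u1) w) = (0, 0, 0)"
    "vadd (vsmult w2 u) (vsmult (- u2) w) = (0, 0, 0)"
    "vadd (vsmult w3 u) (vsmult (- u3) w) = (0, 0, 0)"
    by (auto simp: uw vadd_def vsmult_def algebra_simps)
  then have "- u1 = 0" "- u2 = 0" "- u3 = 0"
    using indep unfolding lin_indep2_def by blast+
  then have "u = (0, 0, 0)"
    by (simp add: uw)
  then have "vadd (vsmult 1 u) (vsmult 0 w) = (0, 0, 0)"
    by (simp add: vadd_def vsmult_def)
  then show False
    using indep unfolding lin_indep2_def by fastforce
qed

lemma dot_cross_eq_0: "v \<in> pg_line u w \<Longrightarrow> dot (cross u w) v = 0"
  unfolding pg_line_def dot_def cross_def vadd_def vsmult_def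
  by (auto simp: algebra_simps)

section \<open>An explicit model of \<open>GF(27)\<close>\<close>

datatype gf3 = Zero3 | One3 | Two3

instantiation gf3 :: "{plus, uminus, times}"
begin

fun plus_gf3 :: "gf3 \<Rightarrow> gf3 \<Rightarrow> gf3" where
  "plus_gf3 Zero3 y = y"
| "plus_gf3 x Zero3 = x"
| "plus_gf3 One3 One3 = Two3"
| "plus_gf3 Two3 Two3 = One3"
| "plus_gf3 _ _ = Zero3"

fun uminus_gf3 :: "gf3 \<Rightarrow> gf3" where
  "uminus_gf3 Zero3 = Zero3"
| "uminus_gf3 One3 = Two3"
| "uminus_gf3 Two3 = One3"

fun times_gf3 :: "gf3 \<Rightarrow> gf3 \<Rightarrow> gf3" where
  "times_gf3 Zero3 _ = Zero3"
| "times_gf3 One3 y = y"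
| "times_gf3 Two3 y = - y"

instance ..

end

text \<open>\<^term>\<open>GF27 c0 c1 c2\<close> stands for \<open>c0 + c1 t + c2 t\<^sup>2\<close> in \<open>GF(3)[t]/(t\<^sup>3 - t - 1)\<close>.\<close>

datatype gf27 = GF27 gf3 gf3 gf3

instantiation gf27 :: "{zero, one, plus, uminus, times}"
begin

definition zero_gf27 :: gf27 where
  "0 = GF27 Zero3 Zero3 Zero3"

definition one_gf27 :: gf27 where
  "1 = GF27 One3 Zero3 Zero3"

fun plus_gf27 :: "gf27 \<Rightarrow> gf27 \<Rightarrow> gf27" where
  "GF27 a0 a1 a2 + GF27 b0 b1 b2 = GF27 (a0 + b0) (a1 + b1) (a2 + b2)"

fun uminus_gf27 :: "gf27 \<Rightarrow> gf27" where
  "- GF27 a0 a1 a2 = GF27 (- a0) (- a1) (- a2)"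

fun times_gf27 :: "gf27 \<Rightarrow> gf27 \<Rightarrow> gf27" where
  "GF27 a0 a1 a2 * GF27 b0 b1 b2 =
     GF27 (a0 * b0 + a1 * b2 + a2 * b1)
          (a0 * b1 + a1 * b0 + a1 * b2 + a2 * b1 + a2 * b2)
          (a0 * b2 + a1 * b1 + a2 * b0 + a2 * b2)"

instance ..

end

text \<open>\<open>g\<^sub>k\<close> is the element whose coefficients \<open>c0, c1, c2\<close> are the base-3 digits of \<open>k = c0 + 3 c1 + 9 c2\<close>.\<close>

abbreviation g0 :: gf27 where "g0 \<equiv> GF27 Zero3 Zero3 Zero3"
abbreviation g1 :: gf27 where "g1 \<equiv> GF27 One3 Zero3 Zero3"
abbreviation g2 :: gf27 where "g2 \<equiv> GF27 Two3 Zero3 Zero3"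
abbreviation g3 :: gf27 where "g3 \<equiv> GF27 Zero3 One3 Zero3"
abbreviation g4 :: gf27 where "g4 \<equiv> GF27 One3 One3 Zero3"
abbreviation g5 :: gf27 where "g5 \<equiv> GF27 Two3 One3 Zero3"
abbreviation g6 :: gf27 where "g6 \<equiv> GF27 Zero3 Two3 Zero3"
abbreviation g7 :: gf27 where "g7 \<equiv> GF27 One3 Two3 Zero3"
abbreviation g8 :: gf27 where "g8 \<equiv> GF27 Two3 Two3 Zero3"
abbreviation g9 :: gf27 where "g9 \<equiv> GF27 Zero3 Zero3 One3"
abbreviation g10 :: gf27 where "g10 \<equiv> GF27 One3 Zero3 One3"
abbreviation g11 :: gf27 where "g11 \<equiv> GF27 Two3 Zero3 One3"
abbreviation g12 :: gf27 where "g12 \<equiv> GF27 Zero3 One3 One3"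
abbreviation g13 :: gf27 where "g13 \<equiv> GF27 One3 One3 One3"
abbreviation g14 :: gf27 where "g14 \<equiv> GF27 Two3 One3 One3"
abbreviation g15 :: gf27 where "g15 \<equiv> GF27 Zero3 Two3 One3"
abbreviation g16 :: gf27 where "g16 \<equiv> GF27 One3 Two3 One3"
abbreviation g17 :: gf27 where "g17 \<equiv> GF27 Two3 Two3 One3"
abbreviation g18 :: gf27 where "g18 \<equiv> GF27 Zero3 Zero3 Two3"
abbreviation g19 :: gf27 where "g19 \<equiv> GF27 One3 Zero3 Two3"
abbreviation g20 :: gf27 where "g20 \<equiv> GF27 Two3 Zero3 Two3"
abbreviation g21 :: gf27 where "g21 \<equiv> GF27 Zero3 One3 Two3"
abbreviation g22 :: gf27 where "g22 \<equiv> GF27 One3 One3 Two3"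
abbreviation g23 :: gf27 where "g23 \<equiv> GF27 Two3 One3 Two3"
abbreviation g24 :: gf27 where "g24 \<equiv> GF27 Zero3 Two3 Two3"
abbreviation g25 :: gf27 where "g25 \<equiv> GF27 One3 Two3 Two3"
abbreviation g26 :: gf27 where "g26 \<equiv> GF27 Two3 Two3 Two3"

definition gf27_elems :: "gf27 list" where
  "gf27_elems = [g0, g1, g2, g3, g4, g5, g6, g7, g8, g9, g10, g11, g12, g13, g14, g15, g16, g17, g18, g19, g20, g21, g22, g23, g24, g25, g26]"

lemma set_gf27_elems: "set gf27_elems = UNIV"
proof -
  have "GF27 a b c \<in> set gf27_elems" for a b c
    by (cases a; cases b; cases c) (simp_all add: gf27_elems_def)
  then show ?thesis
    by (metis UNIV_eq_I gf27.exhaust)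
qed

instance gf27 :: finite
  by standard (simp flip: set_gf27_elems)

lemma distinct_gf27_elems: "distinct gf27_elems"
  by (simp add: gf27_elems_def)

lemma card_UNIV_gf27: "CARD(gf27) = 27"
proof -
  have "CARD(gf27) = length gf27_elems"
    using distinct_card[OF distinct_gf27_elems] by (simp only: set_gf27_elems)
  also have "\<dots> = 27"
    by (simp add: gf27_elems_def)
  finally show ?thesis .
qed

lemma list_all_gf27_elems: "list_all P gf27_elems \<longleftrightarrow> (\<forall>x. P x)"
  by (simp add: list_all_iff set_gf27_elems)

lemma list_all_gf27_elemsD: "list_all P gf27_elems \<Longrightarrow> P x"
  by (simp add: list_all_gf27_elems)

lemma card_Collect_gf27: "card {x. P x} = length (filter P gf27_elems)"
  using distinct_length_filter[OF distinct_gf27_elems] by (simp add: set_gf27_elems)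

lemma gf27_add_uminus_eq_0_iff: "x + - y = (0::gf27) \<longleftrightarrow> x = y"
proof -
  have "a + - b = Zero3 \<longleftrightarrow> a = b" for a b :: gf3
    by (cases a; cases b) simp_all
  then show ?thesis
    by (cases x; cases y) (simp add: zero_gf27_def)
qed

lemma gf27_invertible:
  assumes "x \<noteq> 0"
  shows "\<exists>y. x * y = (1::gf27)"
proof -
  have "list_all (\<lambda>x. x = 0 \<or> list_ex (\<lambda>y. x * y = 1) gf27_elems) gf27_elems"
    by code_simp
  then show ?thesis
    using assms by (auto simp: list_all_gf27_elems list_ex_iff)
qed

section \<open>The arc\<close>

text \<open>The arc is the set of points \<open>(a : b : 1)\<close> with \<open>b\<close> in \<^term>\<open>arc_column a\<close>.\<close>

fun arc_column :: "gf27 \<Rightarrow> gf27 list" where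
  "arc_column g0 = [g0, g1, g2]"
| "arc_column g1 = [g0, g1, g2, g19, g20, g21, g22, g24, g25]"
| "arc_column g2 = [g0, g1, g2, g10, g11, g12, g14, g15, g17]"
| "arc_column g3 = [g9, g11, g13, g23, g25, g26]"
| "arc_column g4 = [g9, g15, g16, g18, g20, g26]"
| "arc_column g5 = [g12, g13, g16, g18, g22, g23]"
| "arc_column g6 = [g13, g14, g16, g18, g19, g26]"
| "arc_column g7 = [g9, g16, g17, g23, g24, g26]"
| "arc_column g8 = [g9, g10, g13, g18, g21, g23]"
| "arc_column g9 = [g2, g7, g12, g13, g16, g17, g19, g22, g25]"
| "arc_column g10 = [g3, g5, g6, g7, g9, g15, g18, g23, g25]"
| "arc_column g11 = [g2, g5, g10, g14, g22, g24]"
| "arc_column g12 = [g2, g4, g14, g17, g20, g21]"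
| "arc_column g13 = [g2, g8, g9, g10, g15, g16, g20, g22, g24]"
| "arc_column g14 = [g4, g5, g7, g8, g11, g13, g18, g22, g26]"
| "arc_column g15 = [g2, g3, g10, g17, g19, g25]"
| "arc_column g16 = [g2, g6, g9, g11, g13, g14, g20, g21, g25]"
| "arc_column g17 = [g3, g4, g6, g8, g12, g16, g20, g23, g26]"
| "arc_column g18 = [g1, g5, g11, g14, g17, g22, g23, g24, g26]"
| "arc_column g19 = [g1, g7, g12, g17, g20, g25]"
| "arc_column g20 = [g3, g5, g6, g7, g9, g14, g16, g18, g21]"
| "arc_column g21 = [g1, g6, g11, g14, g20, g22]"
| "arc_column g22 = [g3, g4, g6, g8, g10, g13, g16, g23, g24]"
| "arc_column g23 = [g1, g3, g10, g14, g15, g18, g19, g25, g26]"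
| "arc_column g24 = [g1, g8, g10, g15, g22, g25]"
| "arc_column g25 = [g4, g5, g7, g8, g9, g13, g17, g19, g26]"
| "arc_column g26 = [g1, g4, g10, g12, g17, g18, g20, g21, g23]"

definition affine_arc :: "(gf27 \<times> gf27) set" where
  "affine_arc = (SIGMA a:UNIV. set (arc_column a))"

lemma distinct_arc_column: "distinct (arc_column a)"
  by (rule list_all_gf27_elemsD[of "\<lambda>a. distinct (arc_column a)"]) code_simp

lemma length_arc_column_le: "length (arc_column a) \<le> 9"
  by (rule list_all_gf27_elemsD[of "\<lambda>a. length (arc_column a) \<le> 9"]) code_simp

lemma length_arc_column_1: "length (arc_column 1) = 9"
  by (simp add: one_gf27_def)

lemma card_affine_arc: "card affine_arc = 201"
proof -
  have "sum_list (map (\<lambda>a. length (arc_column a)) gf27_elems) = 201"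
    by code_simp
  then have "(\<Sum>a\<in>UNIV. length (arc_column a)) = 201"
    by (simp add: sum_list_distinct_conv_sum_set distinct_gf27_elems set_gf27_elems)
  then show ?thesis
    by (simp add: affine_arc_def card_SigmaI distinct_card distinct_arc_column)
qed

lemma card_arc_column_line_le: "card {a. l * a + m \<in> set (arc_column a)} \<le> 9"
proof -
  obtain l0 l1 l2 where l: "l = GF27 l0 l1 l2"
    by (cases l)
  have "list_all (\<lambda>m. length (filter (\<lambda>a. l * a + m \<in> set (arc_column a)) gf27_elems) \<le> 9)
      gf27_elems"
    unfolding l by (induct l0; induct l1; induct l2) code_simp+
  then show ?thesis
    by (simp add: card_Collect_gf27 list_all_gf27_elems)
qed

lemma card_affine_arc_graph_le: "card {p \<in> affine_arc. snd p = l * fst p + m} \<le> 9"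
proof -
  have "{p \<in> affine_arc. snd p = l * fst p + m} =
      (\<lambda>a. (a, l * a + m)) ` {a. l * a + m \<in> set (arc_column a)}"
    by (auto simp: affine_arc_def)
  then have "card {p \<in> affine_arc. snd p = l * fst p + m} \<le>
      card {a. l * a + m \<in> set (arc_column a)}"
    by (simp add: card_image_le)
  also have "\<dots> \<le> 9"
    by (rule card_arc_column_line_le)
  finally show ?thesis .
qed

lemma card_affine_arc_column_le: "card {p \<in> affine_arc. fst p = c} \<le> 9"
proof -
  have "{p \<in> affine_arc. fst p = c} = Pair c ` set (arc_column c)"
    by (auto simp: affine_arc_def)
  then have "card {p \<in> affine_arc. fst p = c} \<le> card (set (arc_column c))"
    by (simp add: card_image_le)
  also have "\<dots> \<le> length (arc_column c)"
    by (rule card_length)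
  also have "\<dots> \<le> 9"
    by (rule length_arc_column_le)
  finally show ?thesis .
qed

section \<open>The arc in a field of order 27\<close>

fun of_gf3 :: "gf3 \<Rightarrow> 'a::ring_1" where
  "of_gf3 Zero3 = 0"
| "of_gf3 One3 = 1"
| "of_gf3 Two3 = -1"

lemma of_gf3_add:
  assumes "(3::'a::ring_1) = 0"
  shows "of_gf3 (x + y) = (of_gf3 x + of_gf3 y :: 'a)"
proof -
  have two: "(2::'a) = -1" and minus_two: "(-2::'a) = 1"
    using assms by (simp_all add: eq_neg_iff_add_eq_0 neg_eq_iff_add_eq_0)
  show ?thesis
    by (cases x; cases y) (simp_all add: two minus_two)
qed

lemma of_gf3_uminus: "of_gf3 (- x) = - (of_gf3 x :: 'a::ring_1)"
  by (cases x) simp_all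

lemma of_gf3_mult: "of_gf3 (x * y) = (of_gf3 x * of_gf3 y :: 'a::ring_1)"
  by (cases x; cases y) simp_all

fun gf27_embed :: "'a::comm_ring_1 \<Rightarrow> gf27 \<Rightarrow> 'a" where
  "gf27_embed \<alpha> (GF27 c0 c1 c2) = of_gf3 c0 + of_gf3 c1 * \<alpha> + of_gf3 c2 * \<alpha>\<^sup>2"

locale gf27_root =
  fixes \<alpha> :: "'a::field"
  assumes char_3: "(3::'a) = 0"
    and cube: "\<alpha> ^ 3 = \<alpha> + 1"
begin

abbreviation embed :: "gf27 \<Rightarrow> 'a" where
  "embed \<equiv> gf27_embed \<alpha>"

lemma embed_0: "embed 0 = 0"
  by (simp add: zero_gf27_def)

lemma embed_1: "embed 1 = 1"
  by (simp add: one_gf27_def)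

lemma embed_add: "embed (x + y) = embed x + embed y"
  by (cases x; cases y) (simp add: of_gf3_add[OF char_3] algebra_simps)

lemma embed_uminus: "embed (- x) = - embed x"
  by (cases x) (simp add: of_gf3_uminus algebra_simps)

lemma embed_mult: "embed (x * y) = embed x * embed y"
proof -
  obtain a0 a1 a2 b0 b1 b2 where xy: "x = GF27 a0 a1 a2" "y = GF27 b0 b1 b2"
    by (cases x, cases y)
  have "embed x * embed y = embed (x * y) +
      (of_gf3 a1 * of_gf3 b2 + of_gf3 a2 * of_gf3 b1 + of_gf3 a2 * of_gf3 b2 * \<alpha>) * (\<alpha> ^ 3 - \<alpha> - 1)"
    unfolding xy
    by (simp only: times_gf27.simps gf27_embed.simps of_gf3_add[OF char_3] of_gf3_mult) algebra
  then show ?thesis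
    by (simp add: cube)
qed

lemma embed_eq_0_iff: "embed x = 0 \<longleftrightarrow> x = 0"
proof
  assume "embed x = 0"
  show "x = 0"
  proof (rule ccontr)
    assume "x \<noteq> 0"
    then obtain y where "x * y = 1"
      using gf27_invertible by blast
    then have "embed x * embed y = 1"
      by (metis embed_mult embed_1)
    with \<open>embed x = 0\<close> show False
      by simp
  qed
qed (simp add: embed_0)

lemma inj_embed: "inj embed"
proof (rule injI)
  fix x y
  assume "embed x = embed y"
  then have "embed (x + - y) = 0"
    by (simp add: embed_add embed_uminus)
  then show "x = y"
    by (simp add: embed_eq_0_iff gf27_add_uminus_eq_0_iff)
qed

definition affine_point :: "gf27 \<times> gf27 \<Rightarrow> 'a vec3" where
  "affine_point p = (embed (fst p), embed (snd p), 1)"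

definition arc :: "'a vec3 set set" where
  "arc = (pg_point \<circ> affine_point) ` affine_arc"

lemma inj_pg_point_affine_point: "inj (pg_point \<circ> affine_point)"
proof -
  have "pg_point \<circ> affine_point = (\<lambda>(x, y). pg_point (x, y, 1)) \<circ> map_prod embed embed"
    by (auto simp: affine_point_def)
  then show ?thesis
    using inj_pg_point_affine inj_embed by (metis inj_compose prod.inj_map)
qed

lemma arc_subset_pg_points: "arc \<subseteq> pg_points"
  unfolding arc_def affine_point_def by (auto intro: pg_point_in_pg_points)

lemma card_arc: "card arc = 201"
  unfolding arc_def
  using card_image[OF inj_on_subset[OF inj_pg_point_affine_point]] card_affine_arc by simp

end

locale gf27_field = gf27_root \<alpha> for \<alpha> :: "'a::{field,finite}" +
  assumes card_UNIV: "CARD('a) = 27"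
begin

lemma surj_embed: "surj embed"
proof (rule card_eq_UNIV_imp_eq_UNIV)
  show "card (range embed) = CARD('a)"
    using card_image[OF inj_embed] card_UNIV_gf27 card_UNIV by simp
qed simp

lemma card_affine_arc_on_line_le:
  assumes "(n1, n2, n3) \<noteq> (0, 0, 0)"
  shows "card {p \<in> affine_arc. n1 * embed (fst p) + n2 * embed (snd p) + n3 = 0} \<le> 9"
    (is "card ?S \<le> 9")
proof -
  consider "n2 \<noteq> 0" | "n2 = 0" "n1 \<noteq> 0" | "n1 = 0" "n2 = 0" "n3 \<noteq> 0"
    using assms by auto
  then show ?thesis
  proof cases
    case 1
    obtain l m where l: "embed l = - n1 / n2" and m: "embed m = - n3 / n2"
      using surj_embed by (metis surjD)
    have "embed b = embed (l * a + m)" if "n1 * embed a + n2 * embed b + n3 = 0" for a b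
      using that 1 by (simp add: embed_add embed_mult l m field_simps eq_neg_iff_add_eq_0)
    then have "?S \<subseteq> {p \<in> affine_arc. snd p = l * fst p + m}"
      using inj_embed by (auto dest: injD)
    then have "card ?S \<le> card {p \<in> affine_arc. snd p = l * fst p + m}"
      by (rule card_mono[OF finite])
    also have "\<dots> \<le> 9"
      by (rule card_affine_arc_graph_le)
    finally show ?thesis .
  next
    case 2
    obtain c where c: "embed c = - n3 / n1"
      using surj_embed by (metis surjD)
    have "embed a = embed c" if "n1 * embed a + n2 * embed b + n3 = 0" for a b
      using that 2 by (simp add: c field_simps eq_neg_iff_add_eq_0)
    then have "?S \<subseteq> {p \<in> affine_arc. fst p = c}"
      using inj_embed by (auto dest: injD)
    then have "card ?S \<le> card {p \<in> affine_arc. fst p = c}"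
      by (rule card_mono[OF finite])
    also have "\<dots> \<le> 9"
      by (rule card_affine_arc_column_le)
    finally show ?thesis .
  next
    case 3
    then show ?thesis
      by simp
  qed
qed

lemma card_arc_on_line_le:
  assumes "L \<in> pg_lines"
  shows "card {P \<in> arc. P \<subseteq> L} \<le> 9"
proof -
  obtain u w where indep: "lin_indep2 u w" and L: "L = pg_line u w"
    using assms pg_lines_iff by blast
  obtain n1 n2 n3 where n: "cross u w = (n1, n2, n3)"
    by (cases "cross u w") auto
  let ?S = "{p \<in> affine_arc. n1 * embed (fst p) + n2 * embed (snd p) + n3 = 0}"
  have "{P \<in> arc. P \<subseteq> L} \<subseteq> (pg_point \<circ> affine_point) ` ?S"
  proof clarify
    fix P
    assume "P \<in> arc" "P \<subseteq> L"
    then obtain p where p: "p \<in> affine_arc" "P = pg_point (affine_point p)"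
      unfolding arc_def by auto
    then have "affine_point p \<in> pg_line u w"
      using \<open>P \<subseteq> L\<close> mem_pg_point_self L by blast
    then have "dot (cross u w) (affine_point p) = 0"
      by (rule dot_cross_eq_0)
    then show "P \<in> (pg_point \<circ> affine_point) ` ?S"
      using p by (auto simp: n dot_def affine_point_def)
  qed
  then have "card {P \<in> arc. P \<subseteq> L} \<le> card ((pg_point \<circ> affine_point) ` ?S)"
    by (rule card_mono[OF finite])
  also have "\<dots> \<le> card ?S"
    by (rule card_image_le[OF finite])
  also have "\<dots> \<le> 9"
    using card_affine_arc_on_line_le cross_nonzero[OF indep] n by simp
  finally show ?thesis .
qed

lemma card_arc_on_line_eq:
  "\<exists>L\<in>pg_lines. card {P \<in> arc. P \<subseteq> L} = 9"
proof -
  let ?L = "pg_line (0, 1, 0) (1, 0, 1) :: 'a vec3 set"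
  have indep: "lin_indep2 (0, 1, 0) (1, 0, 1 :: 'a)"
    by (simp add: lin_indep2_def vadd_def vsmult_def)
  then have L: "?L \<in> pg_lines"
    using pg_lines_iff by blast
  have "pg_point (affine_point (1, b)) \<subseteq> ?L" for b
  proof (rule pg_point_subset_pg_line)
    have "affine_point (1, b) = vadd (vsmult (embed b) (0, 1, 0)) (vsmult 1 (1, 0, 1))"
      by (simp add: affine_point_def vadd_def vsmult_def embed_1)
    then show "affine_point (1, b) \<in> ?L"
      unfolding pg_line_def by blast
  qed
  then have sub: "(pg_point \<circ> affine_point) ` Pair 1 ` set (arc_column 1) \<subseteq> {P \<in> arc. P \<subseteq> ?L}"
    by (auto simp: arc_def affine_arc_def)
  have "card (Pair (1::gf27) ` set (arc_column 1)) = 9"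
    using distinct_card[OF distinct_arc_column] length_arc_column_1
    by (simp add: card_image inj_on_def)
  then have "card ((pg_point \<circ> affine_point) ` Pair 1 ` set (arc_column 1)) = 9"
    by (subst card_image) (auto intro: inj_on_subset[OF inj_pg_point_affine_point])
  then have "9 \<le> card {P \<in> arc. P \<subseteq> ?L}"
    using card_mono[OF finite sub] by simp
  then show ?thesis
    using L card_arc_on_line_le[OF L] by (intro bexI[OF _ L]) simp
qed

lemma is_arc_arc: "is_arc arc 201 9"
  unfolding is_arc_def
  using arc_subset_pg_points card_arc card_arc_on_line_le card_arc_on_line_eq by simp

end

lemma is_arc_le_m_arc:
  assumes "is_arc (B :: 'a::{field,finite} vec3 set set) n r"
  shows "n \<le> m_arc r TYPE('a)"
proof -
  have "{n. \<exists>B :: 'a vec3 set set. is_arc B n r} \<subseteq> range (card :: 'a vec3 set set \<Rightarrow> nat)"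
    unfolding is_arc_def by blast
  then have "finite {n. \<exists>B :: 'a vec3 set set. is_arc B n r}"
    by (rule finite_subset) simp
  then show ?thesis
    using assms unfolding m_arc_def by (auto intro: Max_ge)
qed

theorem mainTheorem13:
  assumes "card (UNIV :: 'a::{field,finite} set) = 27"
  shows "(\<exists>B :: 'a vec3 set set. is_arc B 201 9) \<and> m_arc 9 TYPE('a) \<ge> 201"
proof -
  obtain \<alpha> :: 'a where "\<alpha> ^ 3 = \<alpha> + 1"
    using cube_root_exists assms by blast
  then interpret gf27_field \<alpha>
    using assms char_3_of_card_27 by unfold_locales auto
  show ?thesis
    using is_arc_arc is_arc_le_m_arc by blast
qed

end
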